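(* For every normed plane $(V,\|\cdot\|)$, $$\frac13\le c_B(\|\cdot\|)\le 1,$$ and $c_B(\|\cdot\|)=1$ if and only if the norm is derived from an inner product.
   Context: A normed (Minkowski) plane $(V,\|\cdot\|)$ is a two-dimensional real vector space with a norm; $o$ is the origin, $B=\{v:\|v\|\le1\}$ the unit ball, $S=\{v:\|v\|=1\}$ the unit circle. For distinct $x,y$, $\mathrm{bis}(x,y)=\{z\in V:\|z-x\|=\|z-y\|\}$. For $x\in S$, the inner projection is $\mathrm{P_I}(x)=\{z/\|z\|: z\in(\mathrm{bis}(-x,x)\cap B)\setminus\{o\}\}$. The sine function is $s:S\times S\to\mathbb{R}$, $s(u,v)=\inf_{t\in\mathbb{R}}\|u+tv\|$. The constant $c_B$ is $c_B(\|\cdot\|)=\inf_{x\in S}\ \inf_{w\in\mathrm{P_I}(x)} s(w,x)$. *)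

theory Defs
  imports "HOL-Analysis.Analysis"
begin

definition bis :: "'a::real_normed_vector \<Rightarrow> 'a \<Rightarrow> 'a set" where
  "bis x y = {z. norm (z - x) = norm (z - y)}"

definition inner_proj :: "'a::real_normed_vector \<Rightarrow> 'a set" where
  "inner_proj x = (\<lambda>z. z /\<^sub>R norm z) ` ((bis (-x) x \<inter> cball 0 1) - {0})"

definition sine_fn :: "'a::real_normed_vector \<Rightarrow> 'a \<Rightarrow> real" where
  "sine_fn u v = (INF t::real. norm (u + t *\<^sub>R v))"

definition cB :: "'a::real_normed_vector itself \<Rightarrow> real" where
  "cB _ = (INF x \<in> sphere (0::'a) 1. INF w \<in> inner_proj x. sine_fn w x)"

definition inner_product_norm :: "'a::real_normed_vector itself \<Rightarrow> bool" where
  "inner_product_norm _ \<longleftrightarrow>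
     (\<exists>f :: 'a \<Rightarrow> 'a \<Rightarrow> real. bilinear f \<and> (\<forall>x y. f x y = f y x)
        \<and> (\<forall>x. norm x = sqrt (f x x)))"

end

theory Submission
  imports Defs
begin

text \<open>
  If z lies on the bisector of -x and x with \<open>\<parallel>z\<parallel> \<le> 1 = \<parallel>x\<parallel>\<close>, the triangle inequality gives
  \<open>\<parallel>z + s x\<parallel> \<ge> \<parallel>z\<parallel>/2\<close> for all s, so \<open>c\<^sub>B \<ge> 1/2\<close>; and \<open>s(w, x) \<le> \<parallel>w\<parallel> = 1\<close> gives \<open>c\<^sub>B \<le> 1\<close>.
  For an inner product norm the bisector of -x and x is the orthogonal line, so \<open>c\<^sub>B = 1\<close>.

  Conversely, \<open>c\<^sub>B = 1\<close> says that isosceles orthogonality of z to w with \<open>\<parallel>z\<parallel> \<le> \<parallel>w\<parallel>\<close> implies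
  Birkhoff orthogonality. This forces the unit circle to be strictly convex, then makes
  isosceles orthogonality homogeneous, so that \<open>\<parallel>a u + b v\<parallel> = \<parallel>b u + a v\<parallel>\<close> for unit vectors
  u, v. For a unit vector x and a unit vector y isosceles orthogonal to it this yields
  \<open>\<parallel>a x + b y\<parallel>\<^sup>2 = a\<^sup>2 + b\<^sup>2\<close>, and the norm comes from the inner product obtained by polarization.
\<close>

section \<open>Isosceles and Birkhoff orthogonality\<close>

definition isosceles_orth :: "'a::real_normed_vector \<Rightarrow> 'a \<Rightarrow> bool" where
  "isosceles_orth x y \<longleftrightarrow> norm (x + y) = norm (x - y)"

definition birkhoff_orth :: "'a::real_normed_vector \<Rightarrow> 'a \<Rightarrow> bool" where
  "birkhoff_orth x y \<longleftrightarrow> (\<forall>t. norm x \<le> norm (x + t *\<^sub>R y))"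

lemma isosceles_orth_commute: "isosceles_orth x y \<longleftrightarrow> isosceles_orth y x"
  by (simp add: isosceles_orth_def add.commute norm_minus_commute)

lemma norm_minus_diff_eq: "norm (- x - y) = norm (x + (y::'a::real_normed_vector))"
  by (metis minus_add_distrib norm_minus_cancel diff_conv_add_uminus)

lemma isosceles_orth_minus_left [simp]: "isosceles_orth (- x) y \<longleftrightarrow> isosceles_orth x y"
  by (auto simp: isosceles_orth_def norm_minus_commute norm_minus_diff_eq add.commute)

lemma isosceles_orth_minus_right [simp]: "isosceles_orth x (- y) \<longleftrightarrow> isosceles_orth x y"
  by (metis isosceles_orth_commute isosceles_orth_minus_left)

lemma isosceles_orth_scaleR: "isosceles_orth x y \<Longrightarrow> isosceles_orth (c *\<^sub>R x) (c *\<^sub>R y)"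
  by (simp add: isosceles_orth_def flip: scaleR_add_right scaleR_diff_right)

lemma isosceles_orth_0_left [simp]: "isosceles_orth 0 y"
  by (simp add: isosceles_orth_def)

lemma birkhoff_orthD: "birkhoff_orth x y \<Longrightarrow> norm x \<le> norm (x + t *\<^sub>R y)"
  by (simp add: birkhoff_orth_def)

lemma birkhoff_orth_0_left [simp]: "birkhoff_orth 0 y"
  by (simp add: birkhoff_orth_def)

lemma birkhoff_orth_scaleR:
  assumes "birkhoff_orth x y"
  shows "birkhoff_orth (a *\<^sub>R x) (b *\<^sub>R y)"
  unfolding birkhoff_orth_def
proof
  fix t
  show "norm (a *\<^sub>R x) \<le> norm (a *\<^sub>R x + t *\<^sub>R b *\<^sub>R y)"
  proof (cases "a = 0")
    case False
    have "a *\<^sub>R x + t *\<^sub>R b *\<^sub>R y = a *\<^sub>R (x + (t * b / a) *\<^sub>R y)"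
      using False by (simp add: algebra_simps)
    then show ?thesis
      using birkhoff_orthD[OF assms, of "t * b / a"] by (simp add: mult_left_mono)
  qed simp
qed

lemma birkhoff_orth_not_in_span:
  assumes "birkhoff_orth x y" "x \<noteq> 0"
  shows "x \<notin> span {y}"
proof
  assume "x \<in> span {y}"
  then obtain k where "x = k *\<^sub>R y" by (auto simp: span_singleton)
  then show False using birkhoff_orthD[OF assms(1), of "- k"] assms(2) by (auto simp: mult_le_0_iff)
qed

section \<open>Convex functions of one real variable\<close>

lemma convex_on_norm_line: "convex_on UNIV (\<lambda>t::real. norm (p + t *\<^sub>R x))"
proof (rule convex_onI)
  fix u a b :: real
  assume "0 < u" "u < 1"
  have "p + ((1 - u) *\<^sub>R a + u *\<^sub>R b) *\<^sub>R x = (1 - u) *\<^sub>R (p + a *\<^sub>R x) + u *\<^sub>R (p + b *\<^sub>R x)"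
    by (simp add: algebra_simps)
  then show "norm (p + ((1 - u) *\<^sub>R a + u *\<^sub>R b) *\<^sub>R x)
      \<le> (1 - u) * norm (p + a *\<^sub>R x) + u * norm (p + b *\<^sub>R x)"
    using \<open>0 < u\<close> \<open>u < 1\<close> norm_triangle_ineq[of "(1 - u) *\<^sub>R (p + a *\<^sub>R x)" "u *\<^sub>R (p + b *\<^sub>R x)"]
    by simp
qed simp

lemma convex_on_ge_left_of_eq:
  fixes f :: "real \<Rightarrow> real"
  assumes f: "convex_on UNIV f" and "t < m" "m < c" "f c = f m"
  shows "f m \<le> f t"
proof -
  define u where "u = (m - t) / (c - t)"
  have u: "0 < u" "u < 1" using assms by (auto simp: u_def field_simps)
  have "u * (c - t) = m - t" using assms by (simp add: u_def)
  then have "m = (1 - u) *\<^sub>R t + u *\<^sub>R c" by (simp add: algebra_simps)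
  then have "f m \<le> (1 - u) * f t + u * f m"
    using convex_onD[OF f, of u t c] u \<open>f c = f m\<close> by simp
  then have "(1 - u) * f m \<le> (1 - u) * f t" by (simp add: algebra_simps)
  then show ?thesis using u by (simp add: mult_le_cancel_left_pos)
qed

lemma convex_on_ge_of_eq_at_three:
  fixes f :: "real \<Rightarrow> real"
  assumes f: "convex_on UNIV f" and "a < m" "m < b" "f a = f m" "f b = f m"
  shows "f m \<le> f t"
proof (cases t m rule: linorder_cases)
  case less
  then show ?thesis using convex_on_ge_left_of_eq[OF f less] assms by simp
next
  case greater
  have "convex_on UNIV (\<lambda>s. f (- s))"
  proof (rule convex_onI)
    fix u x y :: real
    assume "0 < u" "u < 1"
    then show "f (- ((1 - u) *\<^sub>R x + u *\<^sub>R y)) \<le> (1 - u) * f (- x) + u * f (- y)"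
      using convex_onD[OF f, of u "- x" "- y"] by (simp add: algebra_simps)
  qed simp
  from convex_on_ge_left_of_eq[OF this, of "- t" "- m" "- a"] show ?thesis
    using greater assms by simp
qed simp

lemma convex_on_even_mono:
  fixes f :: "real \<Rightarrow> real"
  assumes f: "convex_on UNIV f" and even: "\<And>t. f (- t) = f t" and "0 \<le> s" "s \<le> t"
  shows "f s \<le> f t"
  using convex_on_le_max[OF convex_on_subset[OF f], of "- t" t s] assms by auto

section \<open>Two-dimensional spaces\<close>

lemma dim_UNIV_2_basis:
  assumes "dim (UNIV :: 'a::real_normed_vector set) = 2"
  obtains B :: "'a::real_normed_vector set"
  where "independent B" "span B = UNIV" "finite B" "card B = 2"
proof -
  obtain B :: "'a set"
    where B: "B \<subseteq> UNIV" "independent B" "UNIV \<subseteq> span B" "card B = dim (UNIV :: 'a set)"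
    by (rule basis_exists)
  with assms have "card B = 2" by simp
  then have "finite B" by (intro card_ge_0_finite) simp
  moreover have "span B = UNIV" using B(3) by auto
  ultimately show thesis using that B(2) \<open>card B = 2\<close> by blast
qed

lemma dim_UNIV_2_not_in_span:
  fixes x :: "'a::real_normed_vector"
  assumes "dim (UNIV :: 'a set) = 2"
  obtains w :: 'a where "w \<notin> span {x}"
proof -
  obtain B :: "'a set" where "independent B" "card B = 2"
    using dim_UNIV_2_basis[OF assms] by blast
  have "\<not> UNIV \<subseteq> span {x}"
  proof
    assume "UNIV \<subseteq> span {x}"
    then have "finite B \<and> card B \<le> card {x}"
      by (intro independent_span_bound) (use \<open>independent B\<close> in auto)
    with \<open>card B = 2\<close> show False by simp
  qed
  then show thesis using that by blast
qed

lemma dim_UNIV_2_span_pair: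
  fixes x w z :: "'a::real_normed_vector"
  assumes "dim (UNIV :: 'a set) = 2" and "x \<noteq> 0" and "w \<notin> span {x}"
  shows "\<exists>a b. z = a *\<^sub>R w + b *\<^sub>R x"
proof (rule ccontr)
  assume none: "\<nexists>a b. z = a *\<^sub>R w + b *\<^sub>R x"
  have "z \<notin> span {w, x}"
  proof
    assume "z \<in> span {w, x}"
    then obtain a where "z - a *\<^sub>R w \<in> span {x}" using span_breakdown_eq by blast
    then obtain b where "z - a *\<^sub>R w = b *\<^sub>R x" by (auto simp: span_singleton)
    then have "z = a *\<^sub>R w + b *\<^sub>R x" by (simp add: algebra_simps)
    with none show False by blast
  qed
  moreover have "independent {w, x}"
    using assms(2,3) by (simp add: independent_insertI)
  ultimately have indep: "independent {z, w, x}" by (rule independent_insertI)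
  have "w \<noteq> x" "z \<noteq> w" "z \<noteq> x"
    using assms(3) \<open>z \<notin> span {w, x}\<close> by (auto intro: span_base)
  then have "card {z, w, x} = 3" by auto
  obtain B :: "'a set" where B: "independent B" "span B = UNIV" "finite B" "card B = 2"
    using dim_UNIV_2_basis[OF assms(1)] by blast
  have "finite {z, w, x} \<and> card {z, w, x} \<le> card B"
    by (rule independent_span_bound) (use B indep in auto)
  with B \<open>card {z, w, x} = 3\<close> show False by simp
qed

text \<open>Intermediate value theorem along the normalised curve \<open>cos s w + sin s x\<close>, \<open>0 \<le> s \<le> \<pi>\<close>,
  whose end points are opposite.\<close>

lemma isosceles_orth_exists_of_not_in_span:
  fixes x w :: "'a::real_normed_vector"
  assumes "x \<noteq> 0" "w \<notin> span {x}" "r > 0"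
  obtains z where "norm z = r" "isosceles_orth z x"
proof -
  define c where "c s = cos s *\<^sub>R w + sin s *\<^sub>R x" for s
  have c_nonzero: "c s \<noteq> 0" for s
  proof
    assume c0: "c s = 0"
    show False
    proof (cases "cos s = 0")
      case True
      then have "sin s \<noteq> 0" using sin_cos_squared_add[of s] by auto
      with c0 True assms(1) show False by (simp add: c_def)
    next
      case False
      from c0 have "cos s *\<^sub>R w = - (sin s *\<^sub>R x)"
        by (simp add: c_def eq_neg_iff_add_eq_0)
      then have "w = (- sin s / cos s) *\<^sub>R x"
        using False by (metis scaleR_scaleR nonzero_divide_eq_eq mult.commute scaleR_minus_left
            divide_inverse scaleR_one left_inverse)
      then have "w \<in> span {x}" by (metis span_base span_scale singletonI)
      with assms(2) show False ..
    qed
  qed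
  define g where "g s = (r / norm (c s)) *\<^sub>R c s" for s
  have norm_g: "norm (g s) = r" for s
    using c_nonzero assms(3) by (simp add: g_def)
  define G where "G s = norm (g s + x) - norm (g s - x)" for s
  have "continuous_on {0..pi} G"
    unfolding G_def g_def c_def using c_nonzero[unfolded c_def]
    by (intro continuous_intros) auto
  moreover have "G pi = - G 0"
  proof -
    have "g pi = - g 0" by (simp add: g_def c_def)
    then show ?thesis
      by (simp add: G_def norm_minus_commute norm_minus_diff_eq add.commute)
  qed
  ultimately obtain s where "G s = 0"
    using IVT'[of G 0 0 pi] IVT2'[of G pi 0 0] by (cases "G 0 \<le> 0") auto
  then show thesis
    using that[OF norm_g] by (simp add: G_def isosceles_orth_def)
qed

lemma dim_UNIV_2_isosceles_orth_exists:
  fixes x :: "'a::real_normed_vector"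
  assumes "dim (UNIV :: 'a set) = 2" "r > 0"
  obtains z where "norm z = r" "isosceles_orth z x"
proof (cases "x = 0")
  case True
  obtain w :: 'a where "w \<notin> span {0}" using dim_UNIV_2_not_in_span[OF assms(1)] .
  then have "w \<noteq> 0" by auto
  then show thesis
    using that[of "(r / norm w) *\<^sub>R w"] True assms(2) by (simp add: isosceles_orth_def)
next
  case False
  obtain w :: 'a where "w \<notin> span {x}" using dim_UNIV_2_not_in_span[OF assms(1)] .
  from isosceles_orth_exists_of_not_in_span[OF False this assms(2)] that show thesis .
qed

section \<open>The sine function and the constant \<open>c\<^sub>B\<close>\<close>

lemma isosceles_orth_norm_add_ge_half_nonneg:
  fixes x z :: "'a::real_normed_vector"
  assumes x: "norm x = 1" and z: "norm z \<le> 1" and "isosceles_orth z x" and s: "0 \<le> s"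
  shows "norm z / 2 \<le> norm (z + s *\<^sub>R x)"
proof -
  have "norm (2 *\<^sub>R x) \<le> norm (z + x) + norm (z - x)"
    using norm_triangle_ineq4[of "z + x" "z - x"] by (simp add: algebra_simps scaleR_2)
  then have one_le: "1 \<le> norm (z + x)"
    using x \<open>isosceles_orth z x\<close> by (simp add: isosceles_orth_def)
  show ?thesis
  proof (cases "s \<le> 1")
    case True
    have "norm (z + x) \<le> norm (z + s *\<^sub>R x) + norm ((1 - s) *\<^sub>R x)"
      using norm_triangle_ineq[of "z + s *\<^sub>R x" "(1 - s) *\<^sub>R x"] by (simp add: algebra_simps)
    moreover have "norm z \<le> norm (z + s *\<^sub>R x) + norm (s *\<^sub>R x)"
      using norm_triangle_ineq4[of "z + s *\<^sub>R x" "s *\<^sub>R x"] by simp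
    ultimately show ?thesis using True s x one_le by simp
  next
    case False
    have "norm (s *\<^sub>R (z + x)) \<le> norm (z + s *\<^sub>R x) + norm ((s - 1) *\<^sub>R z)"
      using norm_triangle_ineq[of "z + s *\<^sub>R x" "(s - 1) *\<^sub>R z"] by (simp add: algebra_simps)
    then have "s * norm (z + x) \<le> norm (z + s *\<^sub>R x) + (s - 1) * norm z"
      using False by simp
    moreover have "s \<le> s * norm (z + x)" using one_le False by simp
    moreover have "(s - 1) * norm z \<le> s - 1"
      using z False mult_left_mono[of "norm z" 1 "s - 1"] by simp
    ultimately show ?thesis using z by linarith
  qed
qed

lemma isosceles_orth_norm_add_ge_half:
  fixes x z :: "'a::real_normed_vector"
  assumes "norm x = 1" "norm z \<le> 1" "isosceles_orth z x"
  shows "norm z / 2 \<le> norm (z + s *\<^sub>R x)"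
proof (cases "0 \<le> s")
  case False
  then show ?thesis
    using isosceles_orth_norm_add_ge_half_nonneg[of "- x" z "- s"] assms by simp
qed (use isosceles_orth_norm_add_ge_half_nonneg assms in blast)

lemma norm_normalized_add_scaleR:
  assumes "z \<noteq> 0"
  shows "norm (z /\<^sub>R norm z + t *\<^sub>R x) = norm (z + (norm z * t) *\<^sub>R x) / norm z"
proof -
  have "z /\<^sub>R norm z + t *\<^sub>R x = (1 / norm z) *\<^sub>R (z + (norm z * t) *\<^sub>R x)"
    using assms by (simp add: algebra_simps divide_inverse)
  then show ?thesis by simp
qed

lemma sine_fn_le: "sine_fn u v \<le> norm (u + t *\<^sub>R v)"
  unfolding sine_fn_def by (rule cINF_lower) (auto intro: bdd_belowI[of _ 0])

lemma sine_fn_greatest: "(\<And>t. c \<le> norm (u + t *\<^sub>R v)) \<Longrightarrow> c \<le> sine_fn u v"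
  unfolding sine_fn_def by (rule cINF_greatest) auto

lemma sine_fn_nonneg: "0 \<le> sine_fn u v"
  by (rule sine_fn_greatest) simp

lemma one_le_sine_fn_iff_birkhoff_orth:
  assumes "norm u = 1"
  shows "1 \<le> sine_fn u v \<longleftrightarrow> birkhoff_orth u v"
  using assms sine_fn_le[of u v] sine_fn_greatest[of 1 u v]
  by (auto simp: birkhoff_orth_def intro: order_trans)

lemma inner_proj_iff:
  "w \<in> inner_proj x \<longleftrightarrow>
     (\<exists>z. z \<noteq> 0 \<and> norm z \<le> 1 \<and> isosceles_orth z x \<and> w = z /\<^sub>R norm z)"
  unfolding inner_proj_def bis_def isosceles_orth_def by auto

lemma norm_inner_proj: "w \<in> inner_proj x \<Longrightarrow> norm w = 1"
  by (auto simp: inner_proj_iff)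

lemma dim_UNIV_2_inner_proj_nonempty:
  fixes x :: "'a::real_normed_vector"
  assumes "dim (UNIV :: 'a set) = 2"
  shows "inner_proj x \<noteq> {}"
proof -
  obtain z :: 'a where "norm z = 1" "isosceles_orth z x"
    using dim_UNIV_2_isosceles_orth_exists[OF assms, of 1] by auto
  then have "z /\<^sub>R norm z \<in> inner_proj x"
    unfolding inner_proj_iff by (intro exI[of _ z]) auto
  then show ?thesis by blast
qed

lemma sine_fn_inner_proj_ge_half:
  assumes "norm x = 1" "w \<in> inner_proj x"
  shows "1/2 \<le> sine_fn w x"
proof -
  obtain z where z: "z \<noteq> 0" "norm z \<le> 1" "isosceles_orth z x" "w = z /\<^sub>R norm z"
    using assms(2) inner_proj_iff by blast
  show ?thesis
  proof (rule sine_fn_greatest)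
    fix t
    have "norm z / 2 \<le> norm (z + (norm z * t) *\<^sub>R x)"
      using isosceles_orth_norm_add_ge_half[OF assms(1) z(2,3)] .
    then show "1/2 \<le> norm (w + t *\<^sub>R x)"
      unfolding z(4) norm_normalized_add_scaleR[OF z(1)] using z(1) by (simp add: field_simps)
  qed
qed

lemma cB_le_sine_fn:
  fixes x :: "'a::real_normed_vector"
  assumes "dim (UNIV :: 'a set) = 2" "norm x = 1" "w \<in> inner_proj x"
  shows "cB TYPE('a) \<le> sine_fn w x"
proof -
  have "(INF w \<in> inner_proj y. sine_fn w y) \<ge> 0" for y :: 'a
    using dim_UNIV_2_inner_proj_nonempty[OF assms(1)] sine_fn_nonneg by (intro cINF_greatest) auto
  then have "cB TYPE('a) \<le> (INF w \<in> inner_proj x. sine_fn w x)"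
    unfolding cB_def using assms(2) by (intro cINF_lower) (auto intro: bdd_belowI[of _ 0])
  also have "\<dots> \<le> sine_fn w x"
    using assms(3) by (intro cINF_lower bdd_belowI2[of _ 0] sine_fn_nonneg)
  finally show ?thesis .
qed

lemma cB_greatest:
  fixes c :: real
  assumes "dim (UNIV :: 'a::real_normed_vector set) = 2"
    and "\<And>x w :: 'a. norm x = 1 \<Longrightarrow> w \<in> inner_proj x \<Longrightarrow> c \<le> sine_fn w x"
  shows "c \<le> cB TYPE('a)"
  unfolding cB_def
proof (rule cINF_greatest)
  obtain w :: 'a where "w \<notin> span {0}" using dim_UNIV_2_not_in_span[OF assms(1)] .
  then have "w /\<^sub>R norm w \<in> sphere 0 1" by auto
  then show "sphere (0::'a) 1 \<noteq> {}" by blast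
  show "c \<le> (INF w \<in> inner_proj x. sine_fn w x)" if "x \<in> sphere (0::'a) 1" for x
    using that assms dim_UNIV_2_inner_proj_nonempty[OF assms(1)] by (intro cINF_greatest) auto
qed

lemma cB_ge_half:
  assumes "dim (UNIV :: 'a::real_normed_vector set) = 2"
  shows "1/2 \<le> cB TYPE('a)"
  using assms sine_fn_inner_proj_ge_half by (rule cB_greatest)

lemma cB_le_1:
  assumes "dim (UNIV :: 'a::real_normed_vector set) = 2"
  shows "cB TYPE('a) \<le> 1"
proof -
  obtain w :: 'a where "w \<notin> span {0}" using dim_UNIV_2_not_in_span[OF assms] .
  then have x: "norm (w /\<^sub>R norm w) = 1" by auto
  then obtain u where u: "u \<in> inner_proj (w /\<^sub>R norm w)"
    using dim_UNIV_2_inner_proj_nonempty[OF assms] by blast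
  have "cB TYPE('a) \<le> sine_fn u (w /\<^sub>R norm w)" by (rule cB_le_sine_fn[OF assms x u])
  also have "\<dots> \<le> norm (u + 0 *\<^sub>R (w /\<^sub>R norm w))" by (rule sine_fn_le)
  finally show ?thesis using norm_inner_proj[OF u] by simp
qed

lemma bilinear_sym_add_scaleR_self:
  assumes "bilinear f" "\<And>x y. f x y = f y x"
  shows "f (a + t *\<^sub>R b) (a + t *\<^sub>R b) = f a a + 2 * t * f a b + t\<^sup>2 * f b b"
  using assms
  by (simp add: bilinear_ladd bilinear_radd bilinear_lmul bilinear_rmul power2_eq_square
      algebra_simps)

lemma inner_product_norm_imp_cB_eq_1:
  assumes "dim (UNIV :: 'a::real_normed_vector set) = 2" "inner_product_norm TYPE('a)"
  shows "cB TYPE('a) = 1"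
proof -
  obtain f :: "'a \<Rightarrow> 'a \<Rightarrow> real"
    where f: "bilinear f" "\<And>x y. f x y = f y x" and norm_f: "\<And>x. norm x = sqrt (f x x)"
    using assms(2) unfolding inner_product_norm_def by blast
  have norm_sq: "(norm v)\<^sup>2 = f v v" for v
    using norm_f[of v] real_sqrt_ge_0_iff[of "f v v"] by (metis norm_ge_zero real_sqrt_pow2)
  have "1 \<le> sine_fn w x" if x: "norm x = 1" and w: "w \<in> inner_proj x" for x w :: 'a
  proof (rule sine_fn_greatest)
    fix t
    obtain z where z: "z \<noteq> 0" "isosceles_orth z x" "w = z /\<^sub>R norm z"
      using w inner_proj_iff by blast
    have "f (z + 1 *\<^sub>R x) (z + 1 *\<^sub>R x) = f (z + (-1) *\<^sub>R x) (z + (-1) *\<^sub>R x)"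
      using z(2) norm_sq[of "z + x"] norm_sq[of "z - x"] by (simp add: isosceles_orth_def)
    then have "f z x = 0" unfolding bilinear_sym_add_scaleR_self[OF f] by simp
    then have "f w x = 0" using z(3) by (simp add: bilinear_lmul[OF f(1)])
    moreover have "f w w = 1" "f x x = 1"
      using norm_sq[of w] norm_sq[of x] norm_inner_proj[OF w] x by simp_all
    ultimately have "(norm (w + t *\<^sub>R x))\<^sup>2 = 1 + t\<^sup>2"
      by (simp add: norm_sq bilinear_sym_add_scaleR_self[OF f])
    then show "1 \<le> norm (w + t *\<^sub>R x)"
      by (metis abs_norm_cancel le_add_same_cancel1 one_power2 real_le_rsqrt zero_le_power2
          real_sqrt_abs)
  qed
  then show ?thesis
    using cB_greatest[OF assms(1), of 1] cB_le_1[OF assms(1)] by fastforce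
qed

lemma cB_eq_1_imp_birkhoff_orth:
  fixes z w :: "'a::real_normed_vector"
  assumes "dim (UNIV :: 'a set) = 2" "cB TYPE('a) = 1"
    and "isosceles_orth z w" "norm z \<le> norm w"
  shows "birkhoff_orth z w"
proof (cases "z = 0")
  case False
  then have "w \<noteq> 0" using assms(4) by auto
  define x where "x = w /\<^sub>R norm w"
  define z' where "z' = z /\<^sub>R norm w"
  have x: "norm x = 1" using \<open>w \<noteq> 0\<close> by (simp add: x_def)
  have "isosceles_orth z' x"
    using isosceles_orth_scaleR[OF assms(3), of "inverse (norm w)"] by (simp add: x_def z'_def)
  moreover have "z' \<noteq> 0" "norm z' \<le> 1"
    using False \<open>w \<noteq> 0\<close> assms(4) by (simp_all add: z'_def field_simps)
  ultimately have u: "z /\<^sub>R norm z \<in> inner_proj x"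
    unfolding inner_proj_iff using \<open>w \<noteq> 0\<close> by (intro exI[of _ z']) (simp add: z'_def)
  have "1 \<le> sine_fn (z /\<^sub>R norm z) x"
    using cB_le_sine_fn[OF assms(1) x u] assms(2) by simp
  then have "birkhoff_orth (z /\<^sub>R norm z) x"
    using one_le_sine_fn_iff_birkhoff_orth norm_inner_proj[OF u] by blast
  from birkhoff_orth_scaleR[OF this, of "norm z" "norm w"] show ?thesis
    using False \<open>w \<noteq> 0\<close> by (simp add: x_def)
qed simp

section \<open>Planes in which isosceles orthogonality implies Birkhoff orthogonality\<close>

locale isosceles_birkhoff_plane =
  fixes type :: "'a::real_normed_vector itself"
  assumes dim_UNIV: "dim (UNIV :: 'a set) = 2"
    and isosceles_imp_birkhoff:
      "\<And>z w :: 'a. isosceles_orth z w \<Longrightarrow> norm z \<le> norm w \<Longrightarrow> birkhoff_orth z w"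
begin

lemma flat_segment_birkhoff_orth:
  fixes p x :: 'a
  assumes x: "norm x = 1" and flat: "\<forall>s\<in>{0..\<beta>}. norm (p + s *\<^sub>R x) = 1"
    and s: "0 < s" "s < \<beta>"
  shows "birkhoff_orth x (p + s *\<^sub>R x)"
proof -
  define r where "r = min (min s (\<beta> - s)) 1"
  have r: "0 < r" "r \<le> 1" "r \<le> s" "r \<le> \<beta> - s" using s by (auto simp: r_def)
  have "norm (r *\<^sub>R x + (p + s *\<^sub>R x)) = 1" "norm (r *\<^sub>R x - (p + s *\<^sub>R x)) = 1"
    using flat[rule_format, of "s + r"] flat[rule_format, of "s - r"] r s
      norm_minus_commute[of "r *\<^sub>R x" "p + s *\<^sub>R x"]
    by (simp_all add: algebra_simps)
  moreover have "norm (r *\<^sub>R x) \<le> 1" using r x by simp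
  ultimately have "birkhoff_orth (r *\<^sub>R x) (p + s *\<^sub>R x)"
    using flat[rule_format, of s] s
    by (intro isosceles_imp_birkhoff) (simp_all add: isosceles_orth_def)
  from birkhoff_orth_scaleR[OF this, of "1 / r" 1] show ?thesis using r by simp
qed

text \<open>x is Birkhoff orthogonal to every interior point \<open>u s = p + s x\<close> of the segment. If z were
  \<open>a (x + c u \<sigma>)\<close> with \<open>c \<noteq> 0\<close>, then sliding \<open>u \<sigma>\<close> along the segment rewrites
  \<open>x + c u \<sigma>\<close> as \<open>k x + c u s'\<close> with \<open>k > 1\<close>, of norm \<open>\<ge> k\<close>, contradicting
  \<open>\<parallel>z\<parallel> \<le> \<bar>a\<bar>\<close>.\<close>

lemma flat_segment_birkhoff_orth_in_span:
  fixes p x z :: 'a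
  assumes x: "norm x = 1" and flat: "\<forall>s\<in>{0..\<beta>}. norm (p + s *\<^sub>R x) = 1"
    and \<sigma>: "0 < \<sigma>" "\<sigma> < \<beta>" and z: "birkhoff_orth z (p + \<sigma> *\<^sub>R x)"
  shows "z \<in> span {x}"
proof -
  let ?u = "\<lambda>s. p + s *\<^sub>R x"
  have u: "?u \<sigma> \<noteq> 0" using flat[rule_format, of \<sigma>] \<sigma> by auto
  have "x \<noteq> 0" using x by auto
  then have "x \<notin> span {?u \<sigma>}"
    using birkhoff_orth_not_in_span flat_segment_birkhoff_orth[OF x flat \<sigma>] by blast
  then obtain a b where ab: "z = a *\<^sub>R x + b *\<^sub>R ?u \<sigma>"
    using dim_UNIV_2_span_pair[OF dim_UNIV u] by blast
  have z_le: "norm z \<le> \<bar>a\<bar>"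
    using birkhoff_orthD[OF z, of "- b"] x by (simp add: ab)
  show ?thesis
  proof (cases "a = 0 \<or> b = 0")
    case True
    with z_le u show ?thesis by (auto simp: ab span_singleton mult_le_0_iff)
  next
    case False
    define c where "c = b / a"
    have "z = a *\<^sub>R (x + c *\<^sub>R ?u \<sigma>)" using False by (simp add: ab c_def algebra_simps)
    then have "norm (x + c *\<^sub>R ?u \<sigma>) \<le> 1" using z_le False by simp
    define s' where "s' = (if c > 0 then \<sigma> / 2 else (\<sigma> + \<beta>) / 2)"
    have "c \<noteq> 0" using False by (simp add: c_def)
    then have s': "0 < s'" "s' < \<beta>" and "c * (\<sigma> - s') > 0"
      using \<sigma> by (auto simp: s'_def mult_neg_neg)
    have "birkhoff_orth x (?u s')" using flat_segment_birkhoff_orth[OF x flat] s' by blast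
    define k where "k = 1 + c * (\<sigma> - s')"
    have "k = norm (k *\<^sub>R x)" using \<open>c * (\<sigma> - s') > 0\<close> x by (simp add: k_def)
    also have "\<dots> \<le> norm (k *\<^sub>R x + c *\<^sub>R ?u s')"
      using birkhoff_orth_scaleR[OF \<open>birkhoff_orth x (?u s')\<close>, of k 1] birkhoff_orthD by fastforce
    also have "k *\<^sub>R x + c *\<^sub>R ?u s' = x + c *\<^sub>R ?u \<sigma>" by (simp add: k_def algebra_simps)
    finally show ?thesis
      using \<open>norm (x + c *\<^sub>R ?u \<sigma>) \<le> 1\<close> \<open>c * (\<sigma> - s') > 0\<close> by (simp add: k_def)
  qed
qed

lemma flat_segment_isosceles_orth:
  fixes p x :: 'a
  assumes x: "norm x = 1" and flat: "\<forall>s\<in>{0..\<beta>}. norm (p + s *\<^sub>R x) = 1"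
    and \<sigma>: "0 < \<sigma>" "\<sigma> < \<beta>" and \<rho>: "0 < \<rho>" "\<rho> \<le> 1"
  shows "norm (p + (\<sigma> + \<rho>) *\<^sub>R x) = norm (p + (\<sigma> - \<rho>) *\<^sub>R x)"
proof -
  let ?u = "p + \<sigma> *\<^sub>R x"
  obtain z where z: "norm z = \<rho>" "isosceles_orth z ?u"
    using dim_UNIV_2_isosceles_orth_exists[OF dim_UNIV \<rho>(1)] by blast
  then have "birkhoff_orth z ?u"
    using flat[rule_format, of \<sigma>] \<sigma> \<rho> by (intro isosceles_imp_birkhoff) auto
  then have "z \<in> span {x}" by (rule flat_segment_birkhoff_orth_in_span[OF x flat \<sigma>])
  then obtain a where "z = a *\<^sub>R x" by (auto simp: span_singleton)
  with z x have "isosceles_orth (\<rho> *\<^sub>R x) ?u"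
    by (cases "a \<ge> 0") (auto simp: abs_if)
  then show ?thesis
    by (simp add: isosceles_orth_def norm_minus_commute algebra_simps)
qed

lemma flat_segment_prolong:
  fixes p x :: 'a
  assumes x: "norm x = 1" and flat: "\<forall>s\<in>{0..\<beta>}. norm (p + s *\<^sub>R x) = 1" and "\<beta> > 0"
  obtains t where "t > \<beta>" "norm (p + t *\<^sub>R x) = 1"
proof -
  define \<eta> where "\<eta> = min (\<beta> / 3) (1 / 2)"
  have \<eta>: "0 < \<eta>" "\<eta> \<le> \<beta> / 3" "\<eta> \<le> 1 / 2" using \<open>\<beta> > 0\<close> by (auto simp: \<eta>_def)
  have "norm (p + (\<beta> + \<eta>) *\<^sub>R x) = norm (p + (\<beta> - 3 * \<eta>) *\<^sub>R x)"
    using flat_segment_isosceles_orth[OF x flat, where \<sigma> = "\<beta> - \<eta>" and \<rho> = "2 * \<eta>"] \<eta>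
    by (simp add: algebra_simps)
  also have "\<dots> = 1" using flat \<eta> by simp
  finally show thesis using that[of "\<beta> + \<eta>"] \<eta> by simp
qed

lemma unit_sphere_strictly_convex:
  fixes p q :: 'a
  assumes "norm p = 1" "norm q = 1" "norm (p + q) = 2"
  shows "p = q"
proof (rule ccontr)
  assume "p \<noteq> q"
  define \<delta> where "\<delta> = norm (q - p)"
  define x where "x = (q - p) /\<^sub>R \<delta>"
  define h where "h t = norm (p + t *\<^sub>R x)" for t
  have \<delta>: "\<delta> > 0" using \<open>p \<noteq> q\<close> by (simp add: \<delta>_def)
  have x: "norm x = 1" using \<delta> by (simp add: x_def \<delta>_def)
  have h_convex: "convex_on UNIV h" unfolding h_def by (rule convex_on_norm_line)
  have "(1 / 2) *\<^sub>R p + (1 / 2) *\<^sub>R p = p" by (simp flip: scaleR_add_left)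
  then have "p + \<delta> *\<^sub>R x = q" "p + (\<delta> / 2) *\<^sub>R x = (1 / 2) *\<^sub>R (p + q)"
    using \<delta> by (simp_all add: x_def algebra_simps)
  then have h_0: "h 0 = 1" and "h \<delta> = 1" "h (\<delta> / 2) = 1"
    using assms by (simp_all add: h_def)
  then have h_ge: "1 \<le> h t" for t
    using convex_on_ge_of_eq_at_three[OF h_convex, of 0 "\<delta> / 2" \<delta>] \<delta> by simp
  define S where "S = {t. 0 \<le> t \<and> h t \<le> 1}"
  define \<beta> where "\<beta> = Sup S"
  have "bdd_above S"
  proof (rule bdd_aboveI)
    show "t \<le> 2" if "t \<in> S" for t
      using that norm_triangle_ineq4[of "p + t *\<^sub>R x" p] x assms(1) by (simp add: S_def h_def)
  qed
  moreover have "closed S"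
    unfolding S_def h_def by (intro closed_Collect_conj closed_Collect_le continuous_intros)
  moreover have "\<delta> \<in> S" using \<delta> \<open>h \<delta> = 1\<close> by (simp add: S_def)
  ultimately have "\<beta> \<in> S" "\<delta> \<le> \<beta>"
    unfolding \<beta>_def using closed_contains_Sup cSup_upper by blast+
  have "\<forall>s\<in>{0..\<beta>}. norm (p + s *\<^sub>R x) = 1"
  proof
    fix s assume "s \<in> {0..\<beta>}"
    then show "norm (p + s *\<^sub>R x) = 1"
      using convex_on_le_max[OF convex_on_subset[OF h_convex], of 0 \<beta> s] h_ge[of s] h_0
        \<open>\<beta> \<in> S\<close> by (simp add: S_def h_def)
  qed
  moreover have "\<beta> > 0" using \<delta> \<open>\<delta> \<le> \<beta>\<close> by simp
  ultimately obtain t where "t > \<beta>" "norm (p + t *\<^sub>R x) = 1"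
    using flat_segment_prolong[OF x] by blast
  then have "t \<in> S" using \<open>\<beta> > 0\<close> by (simp add: S_def h_def)
  with \<open>bdd_above S\<close> \<open>t > \<beta>\<close> show False unfolding \<beta>_def by (simp add: cSup_upper leD)
qed

lemma isosceles_orth_unit_in_span:
  fixes x p z :: 'a
  assumes x: "norm x = 1" and p: "norm p = 1" "isosceles_orth p x"
    and z: "norm z \<le> 1" "isosceles_orth z x"
  shows "z \<in> span {p}"
proof (cases "z = 0")
  case False
  have p_birkhoff: "birkhoff_orth p x" and z_birkhoff: "birkhoff_orth z x"
    using isosceles_imp_birkhoff p z x by simp_all
  have "x \<noteq> 0" "p \<noteq> 0" using x p by auto
  moreover have "p \<notin> span {x}" using birkhoff_orth_not_in_span[OF p_birkhoff] \<open>p \<noteq> 0\<close> by blast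
  ultimately obtain a b where ab: "z = a *\<^sub>R p + b *\<^sub>R x"
    using dim_UNIV_2_span_pair[OF dim_UNIV] by blast
  have z_le: "norm z \<le> \<bar>a\<bar>"
    using birkhoff_orthD[OF z_birkhoff, of "- b"] p by (simp add: ab)
  with False have "a \<noteq> 0" by auto
  define c where "c = b / a"
  have "z = a *\<^sub>R (p + c *\<^sub>R x)" using \<open>a \<noteq> 0\<close> by (simp add: ab c_def algebra_simps)
  then have "norm (p + c *\<^sub>R x) \<le> 1" using z_le \<open>a \<noteq> 0\<close> by simp
  then have q: "norm (p + c *\<^sub>R x) = 1"
    using birkhoff_orthD[OF p_birkhoff, of c] p by simp
  have "p + (p + c *\<^sub>R x) = 2 *\<^sub>R (p + (c / 2) *\<^sub>R x)" by (simp add: algebra_simps scaleR_2)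
  then have "2 \<le> norm (p + (p + c *\<^sub>R x))"
    using birkhoff_orthD[OF p_birkhoff, of "c / 2"] p by simp
  moreover have "norm (p + (p + c *\<^sub>R x)) \<le> 2"
    using norm_triangle_ineq[of p "p + c *\<^sub>R x"] p q by simp
  ultimately have "p = p + c *\<^sub>R x"
    using unit_sphere_strictly_convex[OF p(1) q] by simp
  then have "c = 0" using \<open>x \<noteq> 0\<close> by simp
  with \<open>z = a *\<^sub>R (p + c *\<^sub>R x)\<close> show ?thesis by (simp add: span_base span_scale)
qed (simp add: span_zero)

lemma isosceles_orth_unit_scaleR_left:
  fixes x p :: 'a
  assumes x: "norm x = 1" and p: "norm p = 1" "isosceles_orth p x" and r: "\<bar>r\<bar> \<le> 1"
  shows "isosceles_orth (r *\<^sub>R p) x"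
proof (cases "r = 0")
  case False
  obtain z where z: "norm z = \<bar>r\<bar>" "isosceles_orth z x"
    using dim_UNIV_2_isosceles_orth_exists[OF dim_UNIV, of "\<bar>r\<bar>"] False by auto
  then have "z \<in> span {p}" using isosceles_orth_unit_in_span[OF x p] r by simp
  then obtain k where "z = k *\<^sub>R p" by (auto simp: span_singleton)
  with z p have "r *\<^sub>R p = z \<or> r *\<^sub>R p = - z" by (auto simp: abs_if split: if_splits)
  with z show ?thesis by auto
qed simp

lemma isosceles_orth_unit_scaleR:
  fixes x p :: 'a
  assumes x: "norm x = 1" and p: "norm p = 1" "isosceles_orth p x"
  shows "isosceles_orth (a *\<^sub>R p) (b *\<^sub>R x)"
proof (cases "\<bar>a\<bar> \<le> \<bar>b\<bar>")
  case True
  show ?thesis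
  proof (cases "b = 0")
    case False
    have "isosceles_orth ((a / b) *\<^sub>R p) x"
      using isosceles_orth_unit_scaleR_left[OF x p] True False by simp
    from isosceles_orth_scaleR[OF this, of b] show ?thesis using False by simp
  qed (use True in simp)
next
  case False
  have "isosceles_orth ((b / a) *\<^sub>R x) p"
    using isosceles_orth_unit_scaleR_left[OF p(1) x] p(2) False
    by (simp add: isosceles_orth_commute)
  from isosceles_orth_scaleR[OF this, of a] show ?thesis
    using False by (simp add: isosceles_orth_commute)
qed

lemma isosceles_orth_homogeneous:
  fixes m d :: 'a
  assumes "isosceles_orth m d"
  shows "isosceles_orth (a *\<^sub>R m) (b *\<^sub>R d)"
proof -
  have short_left: "isosceles_orth (a *\<^sub>R m) (b *\<^sub>R d)"
    if md: "isosceles_orth m d" and le: "norm m \<le> norm d" and "d \<noteq> 0" for m d :: 'a and a b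
  proof -
    define x where "x = d /\<^sub>R norm d"
    have x: "norm x = 1" using \<open>d \<noteq> 0\<close> by (simp add: x_def)
    have "isosceles_orth (m /\<^sub>R norm d) x"
      using isosceles_orth_scaleR[OF md, of "inverse (norm d)"] by (simp add: x_def)
    moreover have "norm (m /\<^sub>R norm d) \<le> 1" using le \<open>d \<noteq> 0\<close> by (simp add: field_simps)
    moreover obtain p where p: "norm p = 1" "isosceles_orth p x"
      using dim_UNIV_2_isosceles_orth_exists[OF dim_UNIV, of 1] by auto
    ultimately have "m /\<^sub>R norm d \<in> span {p}" using isosceles_orth_unit_in_span[OF x p] by simp
    then obtain k where k: "m /\<^sub>R norm d = k *\<^sub>R p" by (auto simp: span_singleton)
    have "m = norm d *\<^sub>R (m /\<^sub>R norm d)" using \<open>d \<noteq> 0\<close> by simp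
    then have "a *\<^sub>R m = (a * norm d * k) *\<^sub>R p" by (simp add: k)
    moreover have "b *\<^sub>R d = (b * norm d) *\<^sub>R x" using \<open>d \<noteq> 0\<close> by (simp add: x_def)
    ultimately show ?thesis using isosceles_orth_unit_scaleR[OF x p] by simp
  qed
  consider "norm m \<le> norm d" "d \<noteq> 0" | "norm d \<le> norm m" "m \<noteq> 0" | "m = 0" "d = 0"
    by fastforce
  then show ?thesis
    using short_left[OF assms] short_left[of d m b a] assms
    by cases (auto simp: isosceles_orth_commute)
qed

lemma norm_scaleR_add_swap:
  fixes u v :: 'a
  assumes "norm u = 1" "norm v = 1"
  shows "norm (a *\<^sub>R u + b *\<^sub>R v) = norm (b *\<^sub>R u + a *\<^sub>R v)"
proof -
  define \<alpha> \<gamma> where "\<alpha> = (a + b) / 2" and "\<gamma> = (a - b) / 2"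
  have "isosceles_orth (u + v) (u - v)"
    using assms by (simp add: isosceles_orth_def flip: scaleR_2)
  then have "norm (\<alpha> *\<^sub>R (u + v) + \<gamma> *\<^sub>R (u - v)) = norm (\<alpha> *\<^sub>R (u + v) - \<gamma> *\<^sub>R (u - v))"
    using isosceles_orth_homogeneous isosceles_orth_def by blast
  moreover have "\<alpha> *\<^sub>R (u + v) + \<gamma> *\<^sub>R (u - v) = (\<alpha> + \<gamma>) *\<^sub>R u + (\<alpha> - \<gamma>) *\<^sub>R v"
    "\<alpha> *\<^sub>R (u + v) - \<gamma> *\<^sub>R (u - v) = (\<alpha> - \<gamma>) *\<^sub>R u + (\<alpha> + \<gamma>) *\<^sub>R v"
    by (simp_all add: algebra_simps)
  moreover have "\<alpha> + \<gamma> = a" "\<alpha> - \<gamma> = b" by (simp_all add: \<alpha>_def \<gamma>_def field_simps)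
  ultimately show ?thesis by simp
qed

lemma norm_add_scaleR_strict_mono:
  fixes x y :: 'a
  assumes x: "norm x = 1" and y: "norm y = 1" "isosceles_orth x y" and st: "0 \<le> s" "s < t"
  shows "norm (x + s *\<^sub>R y) < norm (x + t *\<^sub>R y)"
proof -
  define h where "h t = norm (x + t *\<^sub>R y)" for t
  have h_convex: "convex_on UNIV h" unfolding h_def by (rule convex_on_norm_line)
  have h_even: "h (- t) = h t" for t
    using isosceles_orth_homogeneous[OF y(2), of 1 t] by (simp add: h_def isosceles_orth_def)
  have h_mono: "h a \<le> h b" if "0 \<le> a" "a \<le> b" for a b
    using convex_on_even_mono[OF h_convex h_even that] .
  have h_ge: "1 \<le> h a" for a
    using birkhoff_orthD[OF isosceles_imp_birkhoff[OF y(2)], of a] x y by (simp add: h_def)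
  have "h s \<noteq> h t"
  proof
    assume eq: "h s = h t"
    define m where "m = (s + t) / 2"
    have "h m \<le> (1 - 1/2) * h s + 1/2 * h t"
      using convex_onD[OF h_convex, of "1/2" s t] by (simp add: m_def field_simps)
    moreover have "h s \<le> h m" using st by (intro h_mono) (auto simp: m_def)
    ultimately have hm: "h m = h t" using eq by simp
    define H where "H = h t"
    have H: "1 \<le> H" using h_ge by (simp add: H_def)
    define P Q where "P = (1 / H) *\<^sub>R (x + s *\<^sub>R y)" and "Q = (1 / H) *\<^sub>R (x + t *\<^sub>R y)"
    have P: "norm P = 1" and Q: "norm Q = 1"
      using H eq by (auto simp: P_def Q_def H_def h_def)
    have "(x + s *\<^sub>R y) + (x + t *\<^sub>R y) = 2 *\<^sub>R (x + m *\<^sub>R y)"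
      by (simp add: m_def algebra_simps scaleR_2 flip: scaleR_add_left)
    then have "P + Q = (2 / H) *\<^sub>R (x + m *\<^sub>R y)"
      by (simp add: P_def Q_def flip: scaleR_add_right)
    then have "norm (P + Q) = 2" using H hm by (auto simp: h_def H_def)
    then have "P = Q" by (rule unit_sphere_strictly_convex[OF P Q])
    then have "s *\<^sub>R y = t *\<^sub>R y" using H by (simp add: P_def Q_def)
    with st y(1) show False by auto
  qed
  with h_mono[of s t] st show ?thesis by (simp add: h_def)
qed

lemma norm_add_scaleR_sq:
  fixes x y :: 'a
  assumes x: "norm x = 1" and y: "norm y = 1" "isosceles_orth x y"
  shows "(norm (x + t *\<^sub>R y))\<^sup>2 = 1 + t\<^sup>2"
proof -
  define h where "h t = norm (x + t *\<^sub>R y)" for t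
  have h_even: "h (- t) = h t" for t
    using isosceles_orth_homogeneous[OF y(2), of 1 t] by (simp add: h_def isosceles_orth_def)
  have pos: "(h t)\<^sup>2 = 1 + t\<^sup>2" if t: "t > 0" for t
  proof -
    \<comment> \<open>Swapping the coefficients of x and of the unit vector u in direction \<open>x + t y\<close>
      shows that h takes the value \<open>h t\<close> also at \<open>c = ((h t)\<^sup>2 - 1) / t\<close>.\<close>
    define H where "H = h t"
    have H: "1 \<le> H"
      using birkhoff_orthD[OF isosceles_imp_birkhoff[OF y(2)], of t] x y by (simp add: H_def h_def)
    define u where "u = (1 / H) *\<^sub>R (x + t *\<^sub>R y)"
    have u: "norm u = 1" using H by (auto simp: u_def H_def h_def)
    define c where "c = (H\<^sup>2 - 1) / t"
    have "(1 / H) *\<^sub>R (c *\<^sub>R x - y) = (H / t - 1 / (t * H)) *\<^sub>R x - (1 / H) *\<^sub>R y"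
      using H t by (simp add: c_def field_simps power2_eq_square)
    also have "\<dots> = (H / t) *\<^sub>R x + (- 1 / t) *\<^sub>R u"
      using H t by (simp add: u_def algebra_simps)
    finally have "norm ((1 / H) *\<^sub>R (c *\<^sub>R x - y)) = norm ((- 1 / t) *\<^sub>R x + (H / t) *\<^sub>R u)"
      using norm_scaleR_add_swap[OF x u, of "H / t" "- 1 / t"] by simp
    also have "(- 1 / t) *\<^sub>R x + (H / t) *\<^sub>R u = y"
      using H t by (simp add: u_def algebra_simps)
    finally have "norm ((1 / H) *\<^sub>R (c *\<^sub>R x - y)) = norm y" .
    then have "\<bar>1 / H\<bar> * norm (c *\<^sub>R x - y) = 1" using y(1) by (simp only: norm_scaleR)
    then have "norm (c *\<^sub>R x - y) = H" using H by (simp add: field_simps)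
    also have "norm (c *\<^sub>R x - y) = h c"
      using norm_scaleR_add_swap[OF x y(1), of c "- 1"] h_even[of c]
      by (simp add: h_def norm_minus_commute)
    finally have "h c = h t" by (simp add: H_def)
    moreover have "c \<ge> 0" using H t by (simp add: c_def)
    ultimately have "c = t"
      using norm_add_scaleR_strict_mono[OF x y, of c t] norm_add_scaleR_strict_mono[OF x y, of t c]
        t
      by (cases c t rule: linorder_cases) (auto simp: h_def)
    then show ?thesis using t by (simp add: c_def H_def field_simps power2_eq_square)
  qed
  consider "t > 0" | "t = 0" | "- t > 0" by linarith
  then show ?thesis
    using pos[of t] pos[of "- t"] h_even[of t] x by cases (simp_all add: h_def)
qed

lemma norm_pythagorean:
  fixes x y :: 'a
  assumes "norm x = 1" "norm y = 1" "isosceles_orth x y"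
  shows "(norm (a *\<^sub>R x + b *\<^sub>R y))\<^sup>2 = a\<^sup>2 + b\<^sup>2"
proof (cases "a = 0")
  case False
  have "a *\<^sub>R x + b *\<^sub>R y = a *\<^sub>R (x + (b / a) *\<^sub>R y)" using False by (simp add: algebra_simps)
  then have "(norm (a *\<^sub>R x + b *\<^sub>R y))\<^sup>2 = a\<^sup>2 * (1 + (b / a)\<^sup>2)"
    using norm_add_scaleR_sq[OF assms] by (simp add: power_mult_distrib)
  also have "\<dots> = a\<^sup>2 + b\<^sup>2" using False by (simp add: field_simps)
  finally show ?thesis .
qed (use assms in \<open>simp add: power_mult_distrib\<close>)

lemma inner_product_norm: "inner_product_norm TYPE('a)"
proof -
  obtain w :: 'a where "w \<notin> span {0}" using dim_UNIV_2_not_in_span[OF dim_UNIV] .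
  define x where "x = w /\<^sub>R norm w"
  have x: "norm x = 1" "x \<noteq> 0" using \<open>w \<notin> span {0}\<close> by (auto simp: x_def)
  obtain y where y: "norm y = 1" "isosceles_orth y x"
    using dim_UNIV_2_isosceles_orth_exists[OF dim_UNIV, of 1] by auto
  have xy: "isosceles_orth x y" using y(2) by (simp add: isosceles_orth_commute)
  have "y \<noteq> 0" using y(1) by auto
  then have "y \<notin> span {x}"
    using birkhoff_orth_not_in_span isosceles_imp_birkhoff[OF y(2)] x y(1) by simp
  then have coords: "\<exists>a b. u = a *\<^sub>R x + b *\<^sub>R y" for u
    using dim_UNIV_2_span_pair[OF dim_UNIV x(2)] by (metis add.commute)
  define f where "f u v = ((norm (u + v))\<^sup>2 - (norm (u - v))\<^sup>2) / 4" for u v :: 'a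
  have f_coords: "f (a *\<^sub>R x + b *\<^sub>R y) (c *\<^sub>R x + e *\<^sub>R y) = a * c + b * e" for a b c e
  proof -
    have sum: "(a *\<^sub>R x + b *\<^sub>R y) + (c *\<^sub>R x + e *\<^sub>R y) = (a + c) *\<^sub>R x + (b + e) *\<^sub>R y"
      and diff: "(a *\<^sub>R x + b *\<^sub>R y) - (c *\<^sub>R x + e *\<^sub>R y) = (a - c) *\<^sub>R x + (b - e) *\<^sub>R y"
      by (simp_all add: algebra_simps)
    show ?thesis
      unfolding f_def sum diff norm_pythagorean[OF x(1) y(1) xy]
      by (simp add: power2_eq_square algebra_simps)
  qed
  have f_sym: "f u v = f v u" for u v
    by (simp add: f_def add.commute norm_minus_commute)
  have f_add: "f (u1 + u2) v = f u1 v + f u2 v" and f_scale: "f (k *\<^sub>R u1) v = k * f u1 v"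
    for u1 u2 v k
  proof -
    obtain a1 b1 a2 b2 c e where u: "u1 = a1 *\<^sub>R x + b1 *\<^sub>R y" "u2 = a2 *\<^sub>R x + b2 *\<^sub>R y"
      and v: "v = c *\<^sub>R x + e *\<^sub>R y"
      using coords by meson
    have "u1 + u2 = (a1 + a2) *\<^sub>R x + (b1 + b2) *\<^sub>R y" "k *\<^sub>R u1 = (k * a1) *\<^sub>R x + (k * b1) *\<^sub>R y"
      unfolding u by (simp_all add: algebra_simps)
    then show "f (u1 + u2) v = f u1 v + f u2 v" "f (k *\<^sub>R u1) v = k * f u1 v"
      unfolding v by (simp_all only: u f_coords) (simp_all add: algebra_simps)
  qed
  have "f u (v1 + v2) = f u v1 + f u v2" "f u (k *\<^sub>R v1) = k * f u v1" for u v1 v2 k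
    using f_add[of v1 v2 u] f_scale[of k v1 u] f_sym[of u] by simp_all
  with f_add f_scale have "bilinear f"
    unfolding bilinear_def linear_iff by simp
  moreover have "norm u = sqrt (f u u)" for u
    by (simp add: f_def flip: scaleR_2)
  ultimately show ?thesis
    unfolding inner_product_norm_def using f_sym by blast
qed

end

theorem theorem4p1:
  assumes "dim (UNIV :: 'a::real_normed_vector set) = 2"
  shows "1/3 \<le> cB TYPE('a) \<and> cB TYPE('a) \<le> 1
         \<and> (cB TYPE('a) = 1 \<longleftrightarrow> inner_product_norm TYPE('a))"
proof (intro conjI iffI)
  show "1/3 \<le> cB TYPE('a)" using cB_ge_half[OF assms] by simp
  show "cB TYPE('a) \<le> 1" using cB_le_1[OF assms] .
  show "inner_product_norm TYPE('a)" if "cB TYPE('a) = 1"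
  proof -
    interpret isosceles_birkhoff_plane "TYPE('a)"
      using assms cB_eq_1_imp_birkhoff_orth[OF assms that] by unfold_locales
    show ?thesis by (rule inner_product_norm)
  qed
  show "cB TYPE('a) = 1" if "inner_product_norm TYPE('a)"
    using inner_product_norm_imp_cB_eq_1[OF assms that] .
qed

end
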